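(* If $R$ is a von Neumann regular, locally finite dimensional $K$-algebra, then $R$ is locally unit-regular.
   Context: $K$ is a field; algebras are associative, not necessarily unital. A ring $R$ is regular if for each $x\in R$ there is $y$ with $xyx=x$. A $K$-algebra is locally finite dimensional if every finite subset is contained in a finite dimensional subalgebra. A unital ring $S$ is unit-regular if for each $x\in S$ there is a unit $u$ of $S$ with $xux = x$. A $K$-algebra $R$ is locally unit-regular if every finite subset of $R$ is contained in a $K$-subalgebra of $R$ that has its own identity element and is unit-regular. *)

theory Defs
  imports Complex_Main
begin

text \<open>A (possibly non-unital) associative algebra over a field K: the carrier is a type of
class ring (associative, not necessarily unital), with a K-vector space structure
given by scale, compatible with the multiplication.\<close>

definition is_algebra :: "('k::field \<Rightarrow> 'r::ring \<Rightarrow> 'r) \<Rightarrow> bool" where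
  "is_algebra scale \<longleftrightarrow> vector_space scale \<and>
     (\<forall>a x y. scale a (x * y) = scale a x * y \<and> scale a (x * y) = x * scale a y)"

definition is_subalgebra :: "('k::field \<Rightarrow> 'r::ring \<Rightarrow> 'r) \<Rightarrow> 'r set \<Rightarrow> bool" where
  "is_subalgebra scale S \<longleftrightarrow> module.subspace scale S \<and> (\<forall>x\<in>S. \<forall>y\<in>S. x * y \<in> S)"

definition regular_ring :: "'r::ring itself \<Rightarrow> bool" where
  "regular_ring _ \<longleftrightarrow> (\<forall>x::'r. \<exists>y. x * y * x = x)"

definition locally_finite_dimensional :: "('k::field \<Rightarrow> 'r::ring \<Rightarrow> 'r) \<Rightarrow> bool" where
  "locally_finite_dimensional scale \<longleftrightarrow>
     (\<forall>F. finite F \<longrightarrow> (\<exists>S. is_subalgebra scale S \<and> F \<subseteq> S \<and>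
        (\<exists>B. finite B \<and> S = module.span scale B)))"

definition is_identity_of :: "'r::ring \<Rightarrow> 'r set \<Rightarrow> bool" where
  "is_identity_of e S \<longleftrightarrow> e \<in> S \<and> (\<forall>s\<in>S. e * s = s \<and> s * e = s)"

definition unit_regular_on :: "'r::ring set \<Rightarrow> 'r \<Rightarrow> bool" where
  "unit_regular_on S e \<longleftrightarrow>
     (\<forall>x\<in>S. \<exists>u\<in>S. (\<exists>v\<in>S. u * v = e \<and> v * u = e) \<and> x * u * x = x)"

definition locally_unit_regular :: "('k::field \<Rightarrow> 'r::ring \<Rightarrow> 'r) \<Rightarrow> bool" where
  "locally_unit_regular scale \<longleftrightarrow>
     (\<forall>F. finite F \<longrightarrow> (\<exists>S e. is_subalgebra scale S \<and> F \<subseteq> S \<and>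
        is_identity_of e S \<and> unit_regular_on S e))"

end

theory Submission
  imports Defs
begin

text \<open>
  By regularity every finite subset of R lies in a corner ring pRp with p idempotent, and
  pRp is a subalgebra with identity p; so it suffices that each x in pRp is unit-regular
  there. Local finite dimensionality makes some power of x a combination of higher ones,
  i.e. x^k = x^(k+1) s with s commuting with x. Then g = x^k s^k is an idempotent
  splitting pRp into gRg, where x is invertible, and qRq with q = p - g, where x is
  nilpotent. A regular element n with reflexive inner inverse y is unit-regular as soon
  as the idempotents p - yn and p - ny are equivalent, i.e. as soon as the kernel and the
  cokernel of left multiplication by n on pR are isomorphic. For nilpotent n this is
  proved by induction on the nilpotency index, passing to the restriction of n to its
  image nR.
\<close>

lemma mult_assoc_eq: "(a::'a::semigroup_mult) * b = c \<Longrightarrow> a * (b * z) = c * z"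
  by (simp add: mult.assoc[symmetric])

definition inner_inverse :: "'r::ring \<Rightarrow> 'r" where
  "inner_inverse x = (SOME y. x * y * x = x)"

lemma inner_inverse:
  assumes "regular_ring TYPE('r::ring)"
  shows "x * inner_inverse x * x = (x::'r)"
  using assms unfolding regular_ring_def inner_inverse_def by (metis (mono_tags) someI_ex)

section \<open>Corner rings\<close>

text \<open>For idempotent p this is the corner ring pRp, a ring with identity p.\<close>
definition corner :: "'r::ring \<Rightarrow> 'r set" where
  "corner p = {a. p * a = a \<and> a * p = a}"

lemma in_corner_iff: "a \<in> corner p \<longleftrightarrow> p * a = a \<and> a * p = a"
  by (simp add: corner_def)

definition unit_regular_in_corner :: "'r::ring \<Rightarrow> 'r \<Rightarrow> bool" where
  "unit_regular_in_corner p x \<longleftrightarrow>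
     (\<exists>u\<in>corner p. (\<exists>v\<in>corner p. u * v = p \<and> v * u = p) \<and> x * u * x = x)"

fun corner_pow :: "'r::ring \<Rightarrow> 'r \<Rightarrow> nat \<Rightarrow> 'r" where
  "corner_pow p x 0 = p"
| "corner_pow p x (Suc k) = x * corner_pow p x k"

lemma corner_pow_in_corner:
  "p * p = p \<Longrightarrow> x \<in> corner p \<Longrightarrow> corner_pow p x k \<in> corner p"
  by (induction k) (simp_all add: in_corner_iff mult.assoc, metis mult.assoc)

lemma corner_pow_add:
  assumes "p * p = p" "x \<in> corner p"
  shows "corner_pow p x (i + j) = corner_pow p x i * corner_pow p x j"
  using corner_pow_in_corner[OF assms, of j]
  by (induction i) (simp_all add: in_corner_iff mult.assoc)

lemma corner_pow_commute:
  "x * s = s * x \<Longrightarrow> s \<in> corner p \<Longrightarrow> corner_pow p x k * s = s * corner_pow p x k"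
  by (induction k) (simp_all add: in_corner_iff mult.assoc, metis mult.assoc)

lemma corner_pow_mult_idem:
  assumes ee: "e * e = e" and e: "e \<in> corner p" and ene: "e * n * e = n * e"
  shows "corner_pow e (n * e) j = corner_pow p n j * e"
proof -
  have pe: "p * e = e" using e by (simp add: in_corner_iff)
  have absorb: "e * (corner_pow p n j * e) = corner_pow p n j * e" for j
    by (induction j) (simp_all add: ee pe, metis ene mult.assoc)
  show ?thesis
    by (induction j) (simp_all add: pe, metis absorb mult.assoc)
qed

section \<open>Equivalent idempotents\<close>

text \<open>Murray-von Neumann equivalence: PR and QR are isomorphic right R-modules.\<close>
definition idem_equiv :: "'r::ring \<Rightarrow> 'r \<Rightarrow> bool" where
  "idem_equiv P Q \<longleftrightarrow>
     (\<exists>a b. Q * a = a \<and> a * P = a \<and> P * b = b \<and> b * Q = b \<and> b * a = P \<and> a * b = Q)"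

lemma idem_equivI:
  "Q * a = a \<Longrightarrow> a * P = a \<Longrightarrow> P * b = b \<Longrightarrow> b * Q = b \<Longrightarrow> b * a = P \<Longrightarrow> a * b = Q
    \<Longrightarrow> idem_equiv P Q"
  unfolding idem_equiv_def by blast

lemma idem_equiv_refl: "P * P = P \<Longrightarrow> idem_equiv P P"
  by (rule idem_equivI[of P P P P]) simp_all

lemma idem_equiv_sym: "idem_equiv P Q \<Longrightarrow> idem_equiv Q P"
  unfolding idem_equiv_def by blast

lemma idem_equiv_trans:
  assumes "idem_equiv P Q" "idem_equiv Q T"
  shows "idem_equiv P T"
proof -
  obtain a b where ab: "Q * a = a" "a * P = a" "P * b = b" "b * Q = b" "b * a = P" "a * b = Q"
    using assms(1) unfolding idem_equiv_def by blast
  obtain c d where cd: "T * c = c" "c * Q = c" "Q * d = d" "d * T = d" "d * c = Q" "c * d = T"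
    using assms(2) unfolding idem_equiv_def by blast
  show ?thesis
    by (rule idem_equivI[of T "c * a" P "b * d"])
      (simp_all add: mult.assoc[symmetric] ab cd,
       simp_all add: mult.assoc ab cd ab[THEN mult_assoc_eq] cd[THEN mult_assoc_eq])
qed

lemma idem_equiv_same_right_ideal:
  "P * P = P \<Longrightarrow> Q * Q = Q \<Longrightarrow> P * Q = Q \<Longrightarrow> Q * P = P \<Longrightarrow> idem_equiv P Q"
  by (rule idem_equivI[of Q P P Q]) simp_all

lemma idem_equiv_orthogonal_add:
  assumes "idem_equiv P1 Q1" "idem_equiv P2 Q2"
    and "P1 * P2 = 0" "P2 * P1 = 0" "Q1 * Q2 = 0" "Q2 * Q1 = 0"
  shows "idem_equiv (P1 + P2) (Q1 + Q2)"
proof -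
  obtain a1 b1 where 1: "Q1 * a1 = a1" "a1 * P1 = a1" "P1 * b1 = b1" "b1 * Q1 = b1"
      "b1 * a1 = P1" "a1 * b1 = Q1"
    using assms(1) unfolding idem_equiv_def by blast
  obtain a2 b2 where 2: "Q2 * a2 = a2" "a2 * P2 = a2" "P2 * b2 = b2" "b2 * Q2 = b2"
      "b2 * a2 = P2" "a2 * b2 = Q2"
    using assms(2) unfolding idem_equiv_def by blast
  have z: "a1 * P2 = 0" "a2 * P1 = 0" "b1 * Q2 = 0" "b2 * Q1 = 0"
      "Q2 * a1 = 0" "Q1 * a2 = 0" "P2 * b1 = 0" "P1 * b2 = 0"
    by (metis 1 2 assms(3-6) mult.assoc mult_zero_left mult_zero_right)+
  have zz: "b2 * a1 = 0" "b1 * a2 = 0" "a2 * b1 = 0" "a1 * b2 = 0"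
    by (metis 1 2 z mult.assoc mult_zero_left mult_zero_right)+
  show ?thesis
    by (rule idem_equivI[of _ "a1 + a2" _ "b1 + b2"]) (simp_all add: ring_distribs 1 2 z zz)
qed

text \<open>Left multiplication by w is an isomorphism from PR onto QR.\<close>
lemma idem_equiv_of_left_mult_bij:
  assumes regular: "regular_ring TYPE('r::ring)"
    and PP: "P * P = P" and QQ: "Q * Q = Q" and Qw: "Q * w = w" and wP: "w * P = (w::'r)"
    and inj: "\<And>a. w * a = 0 \<Longrightarrow> P * a = 0"
    and surj: "Q = w * c"
  shows "idem_equiv P Q"
proof -
  define z where "z = inner_inverse w"
  have wzw: "w * z * w = w" unfolding z_def by (rule inner_inverse[OF regular])
  define w' where "w' = P * z * Q"
  have "w * w' = w * z * Q"
    unfolding w'_def using wP by (simp add: mult.assoc[symmetric])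
  also have "\<dots> = Q" using wzw surj by (simp add: mult.assoc[symmetric])
  finally have ww': "w * w' = Q" .
  have "w * (P - P * z * w) = 0"
    using wzw wP by (simp add: right_diff_distrib mult.assoc[symmetric])
  then have "P * (P - P * z * w) = 0" by (rule inj)
  then have Pzw: "P * z * w = P" using PP by (simp add: right_diff_distrib mult.assoc[symmetric])
  have w'w: "w' * w = P" unfolding w'_def using Qw Pzw by (simp add: mult.assoc)
  show ?thesis
    by (rule idem_equivI[of Q w P w'])
      (use Qw wP ww' w'w PP QQ in \<open>simp_all add: w'_def mult.assoc
        PP[THEN mult_assoc_eq] QQ[THEN mult_assoc_eq]\<close>)
qed

lemma idem_equiv_image_summand:
  assumes regular: "regular_ring TYPE('r::ring)"
    and PP: "P * P = P" and QQ: "Q * Q = Q" and Qw: "Q * w = w" and wP: "w * P = (w::'r)"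
    and inj: "\<And>a. w * a = 0 \<Longrightarrow> P * a = 0"
  defines "Y \<equiv> w * inner_inverse w * Q"
  shows "Y * Y = Y" "Q * Y = Y" "Y * Q = Y" "Y * w = w" "idem_equiv P Y"
proof -
  have wzw: "w * inner_inverse w * w = w" by (rule inner_inverse[OF regular])
  show YY: "Y * Y = Y" "Y * w = w"
    unfolding Y_def using wzw Qw by (simp_all add: mult.assoc, metis mult.assoc)
  show "Q * Y = Y" "Y * Q = Y"
    unfolding Y_def using Qw QQ by (simp_all add: mult.assoc[symmetric], simp add: mult.assoc)
  have "Y = w * (inner_inverse w * Q)" unfolding Y_def by (simp add: mult.assoc)
  then show "idem_equiv P Y"
    using idem_equiv_of_left_mult_bij[OF regular PP YY(1) YY(2) wP] inj by blast
qed

text \<open>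
  The unit is y + b, where b maps (p - ny)R, a complement of the image of n, onto the
  kernel (p - yn)R of n.
\<close>
lemma unit_regular_in_corner_of_idem_equiv:
  assumes pp: "p * p = p" and n: "n \<in> corner p" and y: "y \<in> corner p"
    and nyn: "n * y * n = n" and yny: "y * n * y = y"
    and equiv: "idem_equiv (p - y * n) (p - n * y)"
  shows "unit_regular_in_corner p n"
proof -
  obtain a b where ab: "(p - n * y) * a = a" "a * (p - y * n) = a" "(p - y * n) * b = b"
      "b * (p - n * y) = b" "b * a = p - y * n" "a * b = p - n * y"
    using equiv unfolding idem_equiv_def by blast
  have pn: "p * n = n" "n * p = n" and py: "p * y = y" "y * p = y"
    using n y by (simp_all add: in_corner_iff)
  have "p * (p - n * y) = p - n * y" "(p - n * y) * p = p - n * y"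
      "p * (p - y * n) = p - y * n" "(p - y * n) * p = p - y * n"
      "y * (p - n * y) = 0" "(p - y * n) * y = 0" "n * (p - y * n) = 0" "(p - n * y) * n = 0"
    using pp pn py nyn yny
    by (simp_all add: ring_distribs mult.assoc pn[THEN mult_assoc_eq] py[THEN mult_assoc_eq])
  then have abp: "p * a = a" "a * p = a" "p * b = b" "b * p = b"
      and ab0: "y * a = 0" "a * y = 0" "n * b = 0" "b * n = 0"
    by (metis ab mult.assoc mult_zero_left mult_zero_right)+
  show ?thesis
    unfolding unit_regular_in_corner_def
  proof (intro bexI conjI)
    show "(y + b) * (n + a) = p" "(n + a) * (y + b) = p"
      using ab(5,6) by (simp_all add: ring_distribs ab0 algebra_simps)
    show "n * (y + b) * n = n"
      using nyn by (simp add: ring_distribs ab0 mult.assoc)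
    show "y + b \<in> corner p" "n + a \<in> corner p"
      using pn py abp by (simp_all add: in_corner_iff ring_distribs)
  qed
qed

section \<open>Nilpotent elements\<close>

text \<open>
  With e = ny and f = yn, the image of left multiplication by n on pR is eR and its kernel
  is (p - f)R, while (p - e)R is a complement of the image. The restriction n1 of n to eR
  has the inner inverse y1 in eRe, and the kernel and cokernel of n are isomorphic as soon
  as those of n1 are.
\<close>
locale corner_inner_inverse =
  fixes p n y :: "'r::ring"
  assumes regular: "regular_ring TYPE('r)"
    and pp: "p * p = p" and n_corner: "n \<in> corner p" and y_corner: "y \<in> corner p"
    and nyn: "n * y * n = n"
begin

definition "e = n * y"
definition "f = y * n"
definition "n1 = n * e"
definition "y1 = e * inner_inverse n1 * e"
definition "e1 = n1 * y1"
definition "f1 = y1 * n1"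

lemma absorb:
  "p * p = p" "p * n = n" "n * p = n" "p * y = y" "y * p = y"
  "e * n = n" "n * f = n" "e * e = e" "f * f = f" "p * e = e" "e * p = e" "p * f = f" "f * p = f"
  using pp n_corner y_corner nyn
  by (simp_all add: in_corner_iff e_def f_def mult.assoc, metis mult.assoc)+

lemmas absorb' = absorb[THEN mult_assoc_eq]

lemma n1_absorb:
  "e * n1 = n1" "n1 * e = n1" "e * y1 = y1" "y1 * e = y1" "n1 * y1 * n1 = n1"
  "n * y1 = e1" "n * f1 = n1" "e * f1 = f1" "f1 * e = f1" "f1 * f1 = f1"
  "e * e1 = e1" "e1 * e = e1" "e1 * e1 = e1" "e1 * n1 = n1" "p * y1 = y1"
proof -
  show en1: "e * n1 = n1" "n1 * e = n1" "e * y1 = y1" "y1 * e = y1"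
    by (simp_all add: n1_def y1_def absorb' mult.assoc absorb)
  show n1y1n1: "n1 * y1 * n1 = n1"
    using inner_inverse[OF regular, of n1] en1 unfolding y1_def by (metis mult.assoc)
  show ny1: "n * y1 = e1"
    using en1 unfolding e1_def n1_def by (metis mult.assoc)
  show "n * f1 = n1" "e * f1 = f1" "f1 * e = f1" "f1 * f1 = f1"
      "e * e1 = e1" "e1 * e = e1" "e1 * e1 = e1" "e1 * n1 = n1"
    using en1 n1y1n1 ny1 unfolding e1_def f1_def by (metis mult.assoc)+
  show "p * y1 = y1" using en1 absorb by (metis mult.assoc)
qed

lemma n1_nilpotent:
  assumes "corner_pow p n (Suc m) = 0"
  shows "corner_pow e n1 m = 0"
proof -
  have "corner_pow e n1 m = corner_pow p n m * n * y"
    unfolding n1_def using absorb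
    by (subst corner_pow_mult_idem) (simp_all add: in_corner_iff mult.assoc e_def)
  also have "corner_pow p n m * n = corner_pow p n (Suc m)"
    using corner_pow_commute[OF refl n_corner] by simp
  finally show ?thesis using assms by simp
qed

text \<open>
  hR is the kernel of n1 inside the kernel qR of n, with complement XR; left
  multiplication by r maps XR isomorphically onto YR, and the complement ZR of YR in rR
  is isomorphic to the cokernel cR of n1.
\<close>
definition "h = e - f1"
definition "q = p - f"
definition "X = q - h * q"
definition "r = p - e"
definition "Y = r * X * inner_inverse (r * X) * r"
definition "Z = r - Y"
definition "c = e - e1"

lemma kernel_absorb:
  "n * h = 0" "e * h = h" "h * e = h" "h * h = h" "p * h = h"
  "q * q = q" "p * q = q" "n * q = 0" "q * h = h"
proof -
  show nh: "n * h = 0" "e * h = h" "h * e = h" "h * h = h"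
    unfolding h_def by (simp_all add: ring_distribs absorb n1_absorb n1_def)
  show ph: "p * h = h" using nh absorb by (metis mult.assoc)
  have "f * h = 0" unfolding f_def using nh by (simp add: mult.assoc)
  then show "q * q = q" "p * q = q" "n * q = 0" "q * h = h"
    unfolding q_def using ph by (simp_all add: ring_distribs absorb)
qed

lemma complement_absorb:
  "X * X = X" "p * X = X" "n * X = 0" "X * h = 0"
  "h * q * X = 0" "X * (h * q) = 0" "h * q * (h * q) = h * q"
  using kernel_absorb unfolding X_def
  by (simp_all add: ring_distribs mult.assoc kernel_absorb[THEN mult_assoc_eq])

lemma kernel_decomposition: "h * q + X = q"
  by (simp add: X_def)

lemma cokernel_absorb:
  "r * r = r" "p * r = r" "r * p = r" "r * e = 0" "e * r = 0"
  unfolding r_def by (simp_all add: ring_distribs absorb)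

lemma complement_injective:
  assumes "r * X * a = 0"
  shows "X * a = 0"
proof -
  define b where "b = X * a"
  have "r * b = 0" "p * b = b" "n * b = 0"
    using assms complement_absorb unfolding b_def by (simp_all add: mult.assoc[symmetric])
  then have "e * b = b" and "f1 * b = 0"
    unfolding r_def f1_def n1_def by (simp_all add: left_diff_distrib mult.assoc)
  then have "h * b = b" unfolding h_def by (simp add: left_diff_distrib)
  then have "b = X * h * b" using complement_absorb unfolding b_def
    by (metis mult.assoc)
  then show ?thesis using complement_absorb unfolding b_def by simp
qed

lemma image_absorb:
  "Y * Y = Y" "r * Y = Y" "Y * r = Y" "Y * (r * X) = r * X" "idem_equiv X Y"
  "e * Y = 0" "Y * e = 0" "p * Y = Y"
proof -
  have rX: "r * (r * X) = r * X" "r * X * X = r * X"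
    using complement_absorb cokernel_absorb by (simp_all add: mult.assoc[symmetric], simp add: mult.assoc)
  note Y = idem_equiv_image_summand[OF regular complement_absorb(1) cokernel_absorb(1) rX
      complement_injective]
  show "Y * Y = Y" "r * Y = Y" "Y * r = Y" "Y * (r * X) = r * X" "idem_equiv X Y"
    using Y unfolding Y_def by simp_all
  then show "e * Y = 0" "Y * e = 0" "p * Y = Y"
    using cokernel_absorb by (metis mult.assoc mult_zero_left mult_zero_right)+
qed

lemma remainder_absorb:
  "Z * Z = Z" "Z * Y = 0" "Y * Z = 0" "p * Z = Z" "Z * e = 0" "Z * q = 0"
proof -
  show "Z * Z = Z" "Z * Y = 0" "Y * Z = 0" "p * Z = Z"
    unfolding Z_def using image_absorb cokernel_absorb by (simp_all add: ring_distribs)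
  have Ze: "Z * e = 0" and ZrX: "Z * (r * X) = 0"
    unfolding Z_def using image_absorb cokernel_absorb
    by (simp_all add: ring_distribs cokernel_absorb[THEN mult_assoc_eq])
  show "Z * e = 0" by (fact Ze)
  have "X = e * X + r * X" unfolding r_def using complement_absorb by (simp add: ring_distribs)
  then have "Z * X = 0" using Ze ZrX by (metis distrib_left mult.assoc mult_zero_left add_0)
  moreover have "Z * h = 0" using Ze kernel_absorb by (metis mult.assoc mult_zero_left)
  ultimately show "Z * q = 0"
    using kernel_decomposition by (metis distrib_left mult.assoc mult_zero_left add_0)
qed

lemma cokernel_equiv: "idem_equiv Z c"
proof (rule idem_equiv_of_left_mult_bij[OF regular, where w = "c * n * Z" and c = y])
  have ce: "c * e = c" and cn1: "c * n1 = 0"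
    unfolding c_def by (simp_all add: ring_distribs absorb n1_absorb)
  show cc: "c * c = c" unfolding c_def by (simp add: ring_distribs absorb n1_absorb)
  show "Z * Z = Z" "c * (c * n * Z) = c * n * Z" "c * n * Z * Z = c * n * Z"
    using cc remainder_absorb by (simp_all add: mult.assoc[symmetric], simp add: mult.assoc)
  have cne: "c * n * e = 0" using cn1 by (simp add: n1_def mult.assoc)
  have "c * n * X = 0" using complement_absorb by (simp add: mult.assoc)
  then have "c * n * (r * X) = 0"
    unfolding r_def using complement_absorb cne by (simp add: ring_distribs mult.assoc[symmetric])
  then have cnY: "c * n * Y = 0" unfolding Y_def by (metis mult.assoc mult_zero_left)
  have cny: "c * n * y = c" using ce by (simp add: e_def mult.assoc)
  have "c * n * Z * y = c * n * y - c * n * e * y - c * n * Y * y"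
    unfolding Z_def r_def by (simp add: ring_distribs mult.assoc absorb')
  then show "c = c * n * Z * y" using cny cne cnY by simp
next
  fix a assume "c * n * Z * a = 0"
  define b where "b = Z * a"
  define t where "t = y1 * n * b"
  have "c * n * b = n * (b - t)"
    unfolding c_def n1_absorb(6)[symmetric] t_def by (simp add: ring_distribs mult.assoc absorb')
  then have nbt: "n * (b - t) = 0"
    using \<open>c * n * Z * a = 0\<close> by (simp add: b_def mult.assoc)
  have "f * (b - t) = 0" using nbt by (simp add: f_def mult.assoc)
  moreover have "p * (b - t) = b - t"
    using remainder_absorb n1_absorb unfolding b_def t_def
    by (simp add: right_diff_distrib mult.assoc[symmetric])
  ultimately have "q * (b - t) = b - t" by (simp add: q_def left_diff_distrib)
  moreover have "Z * b = b" unfolding b_def using remainder_absorb by (simp add: mult.assoc[symmetric])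
  ultimately have "Z * a = Z * (t + q * (b - t))" by (simp add: b_def)
  moreover have "Z * y1 = 0" using remainder_absorb(5) n1_absorb(3) by (metis mult.assoc mult_zero_left)
  ultimately show "Z * a = 0"
    using remainder_absorb(6) by (simp add: t_def distrib_left mult.assoc[symmetric])
qed

lemma kernel_cokernel_equiv_step:
  assumes "idem_equiv h c"
  shows "idem_equiv q r"
proof -
  have "idem_equiv (h * q) h"
    using complement_absorb kernel_absorb
    by (intro idem_equiv_same_right_ideal)
      (simp_all add: mult.assoc kernel_absorb(4)[THEN mult_assoc_eq])
  then have "idem_equiv (h * q) Z"
    using assms cokernel_equiv by (metis idem_equiv_sym idem_equiv_trans)
  then have "idem_equiv (h * q + X) (Z + Y)"
    using image_absorb complement_absorb remainder_absorb by (intro idem_equiv_orthogonal_add)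
  moreover have "Z + Y = r" by (simp add: Z_def)
  ultimately show ?thesis using kernel_decomposition by simp
qed

end

lemma nilpotent_kernel_cokernel_equiv:
  assumes regular: "regular_ring TYPE('r::ring)"
  shows "p * p = p \<Longrightarrow> n \<in> corner p \<Longrightarrow> y \<in> corner p \<Longrightarrow> n * y * n = n \<Longrightarrow>
    corner_pow p n m = (0::'r) \<Longrightarrow> idem_equiv (p - y * n) (p - n * y)"
proof (induction m arbitrary: p n y)
  case 0
  then have "y = 0" by (simp add: in_corner_iff)
  then show ?case using 0 by (simp add: idem_equiv_refl)
next
  case (Suc m)
  interpret corner_inner_inverse p n y
    using regular Suc.prems by unfold_locales
  have "idem_equiv (e - y1 * n1) (e - n1 * y1)"
    using absorb n1_absorb n1_nilpotent Suc.prems(5) by (intro Suc.IH) (simp_all add: in_corner_iff)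
  then have "idem_equiv q r"
    by (intro kernel_cokernel_equiv_step) (simp add: h_def c_def e1_def f1_def)
  then show ?case by (simp add: q_def r_def e_def f_def)
qed

lemma nilpotent_unit_regular_in_corner:
  assumes regular: "regular_ring TYPE('r::ring)"
    and pp: "p * p = p" and n: "n \<in> corner p" and nil: "corner_pow p n k = (0::'r)"
  shows "unit_regular_in_corner p n"
proof -
  define y0 where "y0 = p * inner_inverse n * p"
  have ny0n: "n * y0 * n = n"
    using n inner_inverse[OF regular, of n] unfolding y0_def in_corner_iff by (metis mult.assoc)
  define y where "y = y0 * n * y0"
  have "y \<in> corner p"
    using pp unfolding y_def y0_def in_corner_iff by (simp add: mult.assoc mult_assoc_eq[OF pp])
  moreover have nyn: "n * y * n = n" and "y * n * y = y"
    using ny0n unfolding y_def by (metis mult.assoc)+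
  moreover have "idem_equiv (p - y * n) (p - n * y)"
    using nilpotent_kernel_cokernel_equiv[OF regular pp n _ nyn nil] \<open>y \<in> corner p\<close> .
  ultimately show ?thesis
    using unit_regular_in_corner_of_idem_equiv[OF pp n] by blast
qed

section \<open>Fitting decomposition\<close>

lemma fitting_power_shift:
  assumes pp: "p * p = p" and x: "x \<in> corner p" and s: "s \<in> corner p" and xs: "x * s = s * x"
    and fit: "corner_pow p x k = corner_pow p x (Suc k) * s"
  shows "corner_pow p x k = corner_pow p x (k + m) * corner_pow p s m"
proof (induction m)
  case 0
  show ?case using corner_pow_in_corner[OF pp x] by (simp add: in_corner_iff)
next
  case (Suc m)
  let ?X = "corner_pow p x" and ?S = "corner_pow p s"
  have X_add: "?X (i + j) = ?X i * ?X j" for i j by (rule corner_pow_add[OF pp x])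
  have "?X (k + Suc m) * ?S (Suc m) = ?X (Suc k) * s * ?X m * ?S m"
    using X_add[of "Suc k" m]
    by (simp add: mult.assoc corner_pow_commute[OF xs s, THEN mult_assoc_eq])
  also have "\<dots> = ?X k * ?X m * ?S m" by (simp only: fit[symmetric])
  also have "\<dots> = ?X k" by (simp only: X_add[symmetric] Suc.IH[symmetric])
  finally show ?case by (rule sym)
qed

text \<open>x is invertible in gRg with inverse sg, and nilpotent in (p - g)R(p - g).\<close>
lemma fitting_idempotent:
  assumes pp: "p * p = p" and x: "x \<in> corner p" and s: "s \<in> corner p" and xs: "x * s = s * x"
    and fit: "corner_pow p x k = corner_pow p x (Suc k) * s"
  defines "g \<equiv> corner_pow p x k * corner_pow p s k"
  shows "g * g = g" "g \<in> corner p" "g * x = x * g" "g * s = s * g" "x * (s * g) = g"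
    "corner_pow p x k * g = corner_pow p x k"
proof -
  let ?X = "corner_pow p x" and ?S = "corner_pow p s"
  have Xs: "?X j * s = s * ?X j" for j by (rule corner_pow_commute[OF xs s])
  have SX: "?S i * ?X j = ?X j * ?S i" for i j
    by (rule corner_pow_commute[OF Xs[symmetric] corner_pow_in_corner[OF pp x]])
  have Xx: "?X j * x = x * ?X j" and Sx: "?S j * x = x * ?S j" for j
    using corner_pow_commute[OF refl x] corner_pow_commute[OF xs[symmetric] x] by blast+
  have "?X k * g = ?X (k + k) * ?S k" by (simp add: g_def corner_pow_add[OF pp x] mult.assoc)
  also have "\<dots> = ?X k" by (rule fitting_power_shift[OF pp x s xs fit, symmetric])
  finally show Xg: "corner_pow p x k * g = corner_pow p x k" .
  have "g * g = ?X k * g * ?S k"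
    by (simp add: g_def mult.assoc SX[of k k, THEN mult_assoc_eq])
  also have "\<dots> = g" unfolding Xg by (simp add: g_def)
  finally show "g * g = g" .
  show "g \<in> corner p"
    using corner_pow_in_corner[OF pp x, of k] corner_pow_in_corner[OF pp s, of k]
    unfolding g_def in_corner_iff by (simp add: mult.assoc[symmetric], simp add: mult.assoc)
  show "g * x = x * g"
    unfolding g_def by (simp add: mult.assoc Sx, simp add: mult.assoc[symmetric] Xx)
  show "g * s = s * g"
    unfolding g_def using corner_pow_commute[OF refl s, of k]
    by (simp add: mult.assoc, simp add: mult.assoc[symmetric] Xs)
  have "x * (s * g) = ?X (Suc k) * s * ?S k"
    by (simp add: g_def mult.assoc mult_assoc_eq[OF Xs[of k, symmetric]])
  also have "\<dots> = g" by (simp only: fit[symmetric] g_def)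
  finally show "x * (s * g) = g" .
qed

lemma unit_regular_in_corner_of_invertible_summand:
  assumes pp: "p * p = p" and gg: "g * g = g" and g: "g \<in> corner p" and x: "x \<in> corner p"
    and gx: "g * x = x * g" and t: "t \<in> corner g" and xt: "x * t = g" and tx: "t * x = g"
    and rest: "unit_regular_in_corner (p - g) (x * (p - g))"
  shows "unit_regular_in_corner p x"
proof -
  define q where "q = p - g"
  obtain u v where uv: "u \<in> corner q" "v \<in> corner q" "u * v = q" "v * u = q"
      and xuq: "x * q * u * (x * q) = x * q"
    using rest unfolding unit_regular_in_corner_def q_def by blast
  have q: "q \<in> corner p" "g * q = 0" "q * g = 0" "q * x = x * q"
    using pp gg g x gx unfolding q_def in_corner_iff by (simp_all add: ring_distribs)
  have uv0: "g * u = 0" "u * g = 0" "g * v = 0" "v * g = 0" "t * v = 0" "v * t = 0"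
    using uv q t unfolding in_corner_iff by (metis mult.assoc mult_zero_left mult_zero_right)+
  have gp: "g + q = p" by (simp add: q_def)
  have "p * t = t" "t * p = t" "p * u = u" "u * p = u" "p * v = v" "v * p = v"
    using uv q t g unfolding in_corner_iff by (metis mult.assoc)+
  moreover have "p * x = x" "g * p = g" using g x by (simp_all add: in_corner_iff)
  ultimately have "t + u \<in> corner p" "x * g + v \<in> corner p"
    by (simp_all add: in_corner_iff ring_distribs mult.assoc[symmetric], simp add: mult.assoc)
  moreover have "u * (x * g) = 0" using uv0 gx by (metis mult.assoc mult_zero_left)
  then have "(t + u) * (x * g + v) = p"
    using tx gg uv0 uv gp by (simp add: ring_distribs mult.assoc[symmetric])
  moreover have "x * g * t = g" using t xt unfolding in_corner_iff by (metis mult.assoc)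
  then have "(x * g + v) * (t + u) = p"
    using uv0 uv gp by (simp add: ring_distribs mult.assoc)
  moreover have "x * (t + u) * x = x"
  proof -
    have "x * u * x = x * q * u * (x * q)"
      using uv q unfolding in_corner_iff by (metis mult.assoc)
    then have "x * (t + u) * x = g * x + x * q"
      using xt xuq by (simp add: ring_distribs)
    also have "\<dots> = x" using gx x gp unfolding in_corner_iff by (metis distrib_left)
    finally show ?thesis .
  qed
  ultimately show ?thesis unfolding unit_regular_in_corner_def by blast
qed

lemma unit_regular_in_corner_of_fitting:
  assumes regular: "regular_ring TYPE('r::ring)"
    and pp: "p * p = p" and x: "x \<in> corner p" and s: "s \<in> corner p" and xs: "x * s = s * x"
    and fit: "corner_pow p x k = corner_pow p x (Suc k) * (s::'r)"
  shows "unit_regular_in_corner p x"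
proof -
  define g where "g = corner_pow p x k * corner_pow p s k"
  note g = fitting_idempotent[OF pp x s xs fit, folded g_def]
  define q where "q = p - g"
  have q: "q * q = q" "q \<in> corner p" "q * x = x * q"
    using pp x g unfolding q_def in_corner_iff by (simp_all add: ring_distribs)
  then have "x * q \<in> corner q"
    unfolding in_corner_iff by (simp add: mult.assoc[symmetric], simp add: mult.assoc)
  have "corner_pow q (x * q) k = corner_pow p x k * q"
    using q by (intro corner_pow_mult_idem) (simp_all add: mult.assoc)
  also have "\<dots> = 0"
    using g corner_pow_in_corner[OF pp x, of k] by (simp add: q_def right_diff_distrib in_corner_iff)
  finally have "unit_regular_in_corner q (x * q)"
    by (rule nilpotent_unit_regular_in_corner[OF regular q(1) \<open>x * q \<in> corner q\<close>])
  moreover have "s * g \<in> corner g" "s * g * x = g"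
    using g xs unfolding in_corner_iff by (metis mult.assoc)+
  ultimately show ?thesis
    using unit_regular_in_corner_of_invertible_summand[OF pp g(1,2) x g(3)] g(5) by (simp add: q_def)
qed

lemma is_algebraD:
  assumes "is_algebra scale"
  shows "module scale" "scale a (u * v) = u * scale a v" "scale a (u * v) = scale a u * v"
  using assms unfolding is_algebra_def by (simp add: module_iff_vector_space, blast+)

lemma commuting_multiples_subspace:
  assumes alg: "is_algebra scale"
  shows "module.subspace scale ((\<lambda>s. a * s) ` {s \<in> corner p. x * s = s * x})"
  unfolding module.subspace_def[OF is_algebraD(1)[OF alg]]
proof (intro conjI ballI allI)
  show "0 \<in> (\<lambda>s. a * s) ` {s \<in> corner p. x * s = s * x}"
    by (rule image_eqI[of _ _ 0]) (simp_all add: in_corner_iff)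
next
  fix u v assume "u \<in> (\<lambda>s. a * s) ` {s \<in> corner p. x * s = s * x}"
    "v \<in> (\<lambda>s. a * s) ` {s \<in> corner p. x * s = s * x}"
  then obtain s t where "u = a * s" "v = a * t" "s \<in> corner p" "t \<in> corner p"
      "x * s = s * x" "x * t = t * x"
    by blast
  then show "u + v \<in> (\<lambda>s. a * s) ` {s \<in> corner p. x * s = s * x}"
    by (intro image_eqI[of _ _ "s + t"]) (simp_all add: in_corner_iff ring_distribs)
next
  fix c u assume "u \<in> (\<lambda>s. a * s) ` {s \<in> corner p. x * s = s * x}"
  then show "scale c u \<in> (\<lambda>s. a * s) ` {s \<in> corner p. x * s = s * x}"
    using is_algebraD(2,3)[OF alg]
    by (auto simp: in_corner_iff intro!: image_eqI[where x = "scale c _"]) (metis)+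
qed

lemma (in vector_space) exists_in_span_of_later_terms:
  assumes B: "finite B" and v: "\<And>i. v i \<in> span B"
  shows "\<exists>j \<le> card B. v j \<in> span (v ` {Suc j..card B})"
proof (rule ccontr)
  assume none: "\<not> ?thesis"
  have "independent (v ` {card B + 1 - d..card B}) \<and> card (v ` {card B + 1 - d..card B}) = d"
    if "d \<le> card B + 1" for d
    using that
  proof (induction d)
    case 0
    then show ?case by (simp add: independent_empty)
  next
    case (Suc d)
    define j where "j = card B - d"
    have j: "j \<le> card B" "card B + 1 - d = Suc j" "card B + 1 - Suc d = j"
      using Suc.prems unfolding j_def by auto
    have "v ` {j..card B} = insert (v j) (v ` {Suc j..card B})"
      using j(1) by (simp add: atLeastAtMost_insertL[symmetric])
    moreover have "v j \<notin> span (v ` {Suc j..card B})" using none j(1) by blast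
    ultimately show ?case
      using Suc j independent_insertI span_base by (auto simp: card_insert_if)
  qed
  from this[of "card B + 1"]
  have "independent (v ` {0..card B})" "card (v ` {0..card B}) = card B + 1" by simp_all
  moreover have "v ` {0..card B} \<subseteq> span B" using v by blast
  ultimately show False using independent_span_bound[OF B] by fastforce
qed

text \<open>
  Some power x^j lies in the span of the finitely many higher powers, so x^j = x^(j+1) s
  for a polynomial s in x.
\<close>
lemma locally_finite_dimensional_fitting:
  fixes scale :: "'k::field \<Rightarrow> 'r::ring \<Rightarrow> 'r" and p x :: 'r
  assumes alg: "is_algebra scale" and lfd: "locally_finite_dimensional scale"
    and pp: "p * p = p" and x: "x \<in> corner p"
  shows "\<exists>k. \<exists>s\<in>corner p. x * s = s * x \<and> corner_pow p x k = corner_pow p x (Suc k) * s"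
proof -
  obtain S B where S: "is_subalgebra scale S" "{p, x} \<subseteq> S" "finite B" "S = module.span scale B"
    using lfd unfolding locally_finite_dimensional_def by (metis finite.emptyI finite_insert)
  have "corner_pow p x i \<in> S" for i
    using S(1,2) unfolding is_subalgebra_def by (induction i) auto
  then obtain j where "corner_pow p x j \<in> module.span scale (corner_pow p x ` {Suc j..card B})"
    using vector_space.exists_in_span_of_later_terms[OF _ S(3), of scale "corner_pow p x"] S(4) alg
    unfolding is_algebra_def by blast
  moreover have "module.span scale (corner_pow p x ` {Suc j..card B})
      \<subseteq> (\<lambda>s. corner_pow p x (Suc j) * s) ` {s \<in> corner p. x * s = s * x}"
  proof (intro module.span_minimal[OF is_algebraD(1)[OF alg]] commuting_multiples_subspace[OF alg]
      image_subsetI)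
    fix i assume "i \<in> {Suc j..card B}"
    then have "corner_pow p x i = corner_pow p x (Suc j) * corner_pow p x (i - Suc j)"
      using corner_pow_add[OF pp x, of "Suc j" "i - Suc j"] by simp
    then show "corner_pow p x i \<in> (\<lambda>s. corner_pow p x (Suc j) * s) ` {s \<in> corner p. x * s = s * x}"
      using corner_pow_in_corner[OF pp x] corner_pow_commute[OF refl x] by auto
  qed
  ultimately show ?thesis by blast
qed

section \<open>Local units\<close>

lemma left_local_unit:
  assumes regular: "regular_ring TYPE('r::ring)" and fin: "finite (F::'r set)"
  shows "\<exists>e. e * e = e \<and> (\<forall>a\<in>F. e * a = a)"
  using fin
proof (induction F rule: finite_induct)
  case empty
  show ?case by (intro exI[of _ 0]) simp
next
  case (insert b F)
  then obtain e where e: "e * e = e" "\<forall>a\<in>F. e * a = a" by blast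
  define c where "c = b - e * b"
  define g where "g = c * inner_inverse c"
  have gc: "g * c = c" and gg: "g * g = g"
    unfolding g_def using inner_inverse[OF regular, of c] by (simp_all add: mult.assoc[symmetric])
  have ec: "e * c = 0" unfolding c_def by (simp add: right_diff_distrib mult.assoc[symmetric] e(1))
  then have eg: "e * g = 0" unfolding g_def by (simp add: mult.assoc[symmetric])
  define e' where "e' = e + g - g * e"
  have "e' * e' = e'" unfolding e'_def
    by (simp add: ring_distribs e(1) eg gg mult.assoc mult_assoc_eq[OF eg])
      (simp add: mult.assoc[symmetric] gg)
  moreover have e'e: "e' * e = e" unfolding e'_def by (simp add: ring_distribs e(1) mult.assoc)
  moreover have "e' * b = b"
  proof -
    have "e' * c = c" unfolding e'_def by (simp add: ring_distribs ec gc mult.assoc)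
    then have "e' * (e * b + c) = e * b + c" by (simp add: distrib_left mult.assoc[symmetric] e'e)
    then show ?thesis by (simp add: c_def)
  qed
  moreover have "e' * a = a" if "a \<in> F" for a
    using that e(2) e'e by (metis mult.assoc)
  ultimately show ?case by blast
qed

lemma right_local_unit:
  assumes regular: "regular_ring TYPE('r::ring)" and fin: "finite (F::'r set)"
  shows "\<exists>f. f * f = f \<and> (\<forall>a\<in>F. a * f = a)"
  using fin
proof (induction F rule: finite_induct)
  case empty
  show ?case by (intro exI[of _ 0]) simp
next
  case (insert b F)
  then obtain f where f: "f * f = f" "\<forall>a\<in>F. a * f = a" by blast
  define c where "c = b - b * f"
  define g where "g = inner_inverse c * c"
  have cg: "c * g = c" and gg: "g * g = g"
    unfolding g_def using inner_inverse[OF regular, of c] by (metis mult.assoc)+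
  have cf: "c * f = 0" unfolding c_def by (simp add: left_diff_distrib mult.assoc f(1))
  then have gf: "g * f = 0" unfolding g_def by (simp add: mult.assoc)
  define f' where "f' = f + g - f * g"
  have "f' * f' = f'" unfolding f'_def
    by (simp add: ring_distribs f(1) gf gg mult.assoc mult_assoc_eq[OF gf])
      (simp add: mult.assoc[symmetric] f(1))
  moreover have ff': "f * f' = f" unfolding f'_def by (simp add: ring_distribs f(1) mult.assoc[symmetric])
  moreover have "b * f' = b"
  proof -
    have "c * f' = c" unfolding f'_def by (simp add: ring_distribs cf cg mult.assoc[symmetric])
    then have "(b * f + c) * f' = b * f + c" by (simp add: distrib_right mult.assoc ff')
    then show ?thesis by (simp add: c_def)
  qed
  moreover have "a * f' = a" if "a \<in> F" for a
    using that f(2) ff' by (metis mult.assoc)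
  ultimately show ?case by blast
qed

lemma local_unit:
  assumes regular: "regular_ring TYPE('r::ring)" and fin: "finite (F::'r set)"
  shows "\<exists>p. p * p = p \<and> F \<subseteq> corner p"
proof -
  obtain e where e: "e * e = e" "\<forall>a\<in>F. e * a = a" using left_local_unit[OF regular fin] by blast
  obtain f where f: "f * f = f" "\<forall>a\<in>insert e F. a * f = a"
    using right_local_unit[OF regular, of "insert e F"] fin by blast
  have ef: "e * f = e" using f(2) by simp
  have "(e + f - f * e) * (e + f - f * e) = e + f - f * e"
    by (simp add: ring_distribs e(1) f(1) ef mult.assoc mult_assoc_eq[OF ef] mult_assoc_eq[OF f(1)])
  moreover have "F \<subseteq> corner (e + f - f * e)"
    using e(2) f(2) by (auto simp: in_corner_iff ring_distribs mult.assoc[symmetric], simp add: mult.assoc)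
  ultimately show ?thesis by blast
qed

lemma corner_subalgebra:
  assumes alg: "is_algebra scale" and pp: "p * p = p"
  shows "is_subalgebra scale (corner p)"
  unfolding is_subalgebra_def module.subspace_def[OF is_algebraD(1)[OF alg]]
proof (intro conjI ballI allI)
  fix u v assume "u \<in> corner p" "v \<in> corner p"
  then show "u + v \<in> corner p" "u * v \<in> corner p"
    unfolding in_corner_iff by (simp_all add: ring_distribs mult.assoc[symmetric], simp add: mult.assoc)
next
  fix c u assume "u \<in> corner p"
  then show "scale c u \<in> corner p"
    unfolding in_corner_iff by (metis is_algebraD(2,3)[OF alg])
qed (simp add: in_corner_iff)

theorem proposition5p5:
  fixes scale :: "'k::field \<Rightarrow> 'r::ring \<Rightarrow> 'r"
  assumes "is_algebra scale"
    and "regular_ring TYPE('r)"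
    and "locally_finite_dimensional scale"
  shows "locally_unit_regular scale"
  unfolding locally_unit_regular_def
proof (intro allI impI)
  fix F :: "'r set"
  assume "finite F"
  then obtain p where pp: "p * p = p" and F: "F \<subseteq> corner p" using local_unit[OF assms(2)] by blast
  have "is_identity_of p (corner p)" using pp by (simp add: is_identity_of_def in_corner_iff)
  moreover have "unit_regular_on (corner p) p"
    unfolding unit_regular_on_def unit_regular_in_corner_def[symmetric]
  proof
    fix x assume x: "x \<in> corner p"
    then obtain k s where "s \<in> corner p" "x * s = s * x" "corner_pow p x k = corner_pow p x (Suc k) * s"
      using locally_finite_dimensional_fitting[OF assms(1,3) pp] by blast
    then show "unit_regular_in_corner p x"
      using unit_regular_in_corner_of_fitting[OF assms(2) pp x] by blast
  qed
  ultimately show "\<exists>S e. is_subalgebra scale S \<and> F \<subseteq> S \<and> is_identity_of e S \<and> unit_regular_on S e"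
    using corner_subalgebra[OF assms(1) pp] F by blast
qed

end
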